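(* Let $n\ge2$, $F_1,\dots,F_n:\mathbb{R}^d\to\mathbb{R}^d$, $F=\frac1n\sum_iF_i$, with $F$ $\mu$-strongly monotone ($\mu>0$) and each $F_i$ $L_i$-Lipschitz; let $z_*$ be the solution of $F(z_* )=0$, $L_{max}=\max_iL_i$, $\sigma_*^2=\frac1n\sum_i\|F_i(z_* )\|^2$. Consider the iterates $z_0^k$ of IEG (defined in the context) started at $z_0$. 1. If $\gamma_2=2\gamma_1$ and $\gamma_1\le\frac{\mu}{10L_{max}^2\sqrt{10n^2+n+29}}$, then $$\|z_0^k-z_*\|^2\le\Big(1-\frac{\gamma_1n\mu}{4}\Big)^k\|z_0-z_*\|^2+\frac{48L_{max}^2}{\mu^2}\big[6n(n-1)\gamma_1^2+\gamma_2^2\big]\sigma_*^2.$$ 2. If IEG is run for $K$ epochs with $\gamma_2=2\gamma_1$ and $\gamma_1=\min\Big\{\frac{\mu}{10L_{max}^2\sqrt{10n^2+2n+29}},\frac{4\log(n^{1/2}K)}{\mu nK}\Big\}$, then $$\|z_0^K-z_*\|^2=\tilde{\mathcal{O}}\Big(e^{-\frac{K\mu^2}{L_{max}^2}}+\frac1{K^2}\Big).$$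
   Context: $\mu$-strongly monotone: $\langle F(z_1)-F(z_2),z_1-z_2\rangle\ge\mu\|z_1-z_2\|^2$. IEG (incremental extragradient) with step sizes $\gamma_1,\gamma_2>0$: set $z_0^0=z_0$; for each epoch $k=0,1,\dots$ and $i=0,\dots,n-1$ set $\bar z_i^k=z_i^k-\gamma_2F_{i+1}(z_i^k)$, $z_{i+1}^k=z_i^k-\gamma_1F_{i+1}(\bar z_i^k)$ (fixed original order every epoch); then $z_0^{k+1}=z_n^k$. $\tilde{\mathcal{O}}$ suppresses constant and logarithmic factors. *)

theory Defs
  imports "HOL-Analysis.Analysis"
begin

text \<open>Operators F_1..F_n are indexed by 1..n: F i for i in {1..n}.\<close>

definition strongly_monotone :: "real \<Rightarrow> ('a::real_inner \<Rightarrow> 'a) \<Rightarrow> bool" where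
  "strongly_monotone \<mu> G \<longleftrightarrow>
     (\<forall>z1 z2. inner (G z1 - G z2) (z1 - z2) \<ge> \<mu> * (norm (z1 - z2))\<^sup>2)"

definition avg_op :: "nat \<Rightarrow> (nat \<Rightarrow> 'a::real_vector \<Rightarrow> 'a) \<Rightarrow> 'a \<Rightarrow> 'a" where
  "avg_op n F z = (1 / real n) *\<^sub>R (\<Sum>i=1..n. F i z)"

definition ieg_step :: "(nat \<Rightarrow> 'a::real_vector \<Rightarrow> 'a) \<Rightarrow> real \<Rightarrow> real \<Rightarrow> nat \<Rightarrow> 'a \<Rightarrow> 'a" where
  "ieg_step F \<gamma>1 \<gamma>2 i z = (let zbar = z - \<gamma>2 *\<^sub>R F (i+1) z in z - \<gamma>1 *\<^sub>R F (i+1) zbar)"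

text \<open>One epoch: z_0^k \<mapsto> z_n^k = z_0^{k+1}, fixed order 0,...,n-1.\<close>
definition ieg_epoch :: "nat \<Rightarrow> (nat \<Rightarrow> 'a::real_vector \<Rightarrow> 'a) \<Rightarrow> real \<Rightarrow> real \<Rightarrow> 'a \<Rightarrow> 'a" where
  "ieg_epoch n F \<gamma>1 \<gamma>2 z = fold (ieg_step F \<gamma>1 \<gamma>2) [0..<n] z"

definition ieg :: "nat \<Rightarrow> (nat \<Rightarrow> 'a::real_vector \<Rightarrow> 'a) \<Rightarrow> real \<Rightarrow> real \<Rightarrow> 'a \<Rightarrow> nat \<Rightarrow> 'a" where
  "ieg n F \<gamma>1 \<gamma>2 z0 k = (ieg_epoch n F \<gamma>1 \<gamma>2 ^^ k) z0"

end

theory Submission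
  imports Defs
begin

(*
  With \<gamma>2 = 2 \<gamma>1 = 2 \<gamma>, one epoch of IEG started at z is the full forward step
  z - \<gamma> (n F(z) + e) for the averaged operator F, perturbed by
  e = \<Sum>i (F_{i+1}(zbar_i) - F_{i+1}(z)). The inner iterates never leave a ball of radius
  O(\<gamma> \<Sum>i ||F_i(z)||) around z, so Lipschitz continuity gives ||e|| = O(\<gamma> n L \<Sum>i ||F_i(z)||),
  and strong monotonicity turns the perturbed step into the contraction
    ||z' - zs||^2 \<le> (1 - 3 \<gamma> n \<mu> / 4) ||z - zs||^2 + 75 \<gamma>^3 n^2 L^2 \<Sum>i ||F_i(zs)||^2 / \<mu>.
  Unrolling this recursion gives part 1. For part 2, each branch of the minimum defining the
  step size makes the contraction factor after K epochs O(1/K^2), and the noise term is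
  O(log^2 K / K^2).
*)

lemma power2_norm_diff_scaleR:
  fixes w y :: "'a::real_inner"
  shows "(norm (w - c *\<^sub>R y))\<^sup>2 = (norm w)\<^sup>2 - 2 * c * inner w y + c\<^sup>2 * (norm y)\<^sup>2"
  unfolding power2_norm_eq_inner
  by (simp add: inner_diff_left inner_diff_right inner_commute algebra_simps power2_eq_square)

lemma norm_perturbed_step_power2_le:
  fixes w v e :: "'a::real_inner"
  assumes gam: "\<gamma> \<ge> 0" and m: "m \<ge> 0"
    and mon: "\<mu> * (norm w)\<^sup>2 \<le> inner v w" and bdd: "norm v \<le> L * norm w"
  shows "(norm (w - \<gamma> *\<^sub>R (m *\<^sub>R v + e)))\<^sup>2
           \<le> (norm w)\<^sup>2 - 2 * (\<gamma> * m * \<mu>) * (norm w)\<^sup>2 + \<gamma> * (2 * norm w * norm e)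
             + \<gamma>\<^sup>2 * (2 * m\<^sup>2 * L\<^sup>2 * (norm w)\<^sup>2) + 2 * \<gamma>\<^sup>2 * (norm e)\<^sup>2"
proof -
  define R E where "R = norm w" and "E = norm e"
  have "m * (\<mu> * R\<^sup>2) \<le> m * inner w v"
    using mon m by (simp add: R_def inner_commute mult_left_mono)
  moreover have "- (R * E) \<le> inner w e"
    using norm_cauchy_schwarz[of "-w" e] by (simp add: R_def E_def)
  ultimately have "\<gamma> * (m * (\<mu> * R\<^sup>2) - R * E) \<le> \<gamma> * (m * inner w v + inner w e)"
    using gam by (intro mult_left_mono) auto
  then have inner: "- 2 * \<gamma> * (m * inner w v + inner w e) \<le> - 2 * (\<gamma> * m * \<mu>) * R\<^sup>2 + \<gamma> * (2 * R * E)"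
    by (simp add: algebra_simps)
  have "m * norm v \<le> m * (L * R)" using bdd m by (simp add: R_def mult_left_mono)
  then have "norm (m *\<^sub>R v + e) \<le> m * (L * R) + E"
    using norm_triangle_ineq[of "m *\<^sub>R v" e] m by (simp add: E_def)
  then have "(norm (m *\<^sub>R v + e))\<^sup>2 \<le> (m * (L * R) + E)\<^sup>2" by (intro power_mono) auto
  also have "\<dots> \<le> 2 * m\<^sup>2 * L\<^sup>2 * R\<^sup>2 + 2 * E\<^sup>2"
    using zero_le_power2[of "m * (L * R) - E"] by (simp add: power2_eq_square algebra_simps)
  finally have "\<gamma>\<^sup>2 * (norm (m *\<^sub>R v + e))\<^sup>2 \<le> \<gamma>\<^sup>2 * (2 * m\<^sup>2 * L\<^sup>2 * R\<^sup>2 + 2 * E\<^sup>2)"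
    by (simp add: mult_left_mono)
  moreover have "(norm (w - \<gamma> *\<^sub>R (m *\<^sub>R v + e)))\<^sup>2
      = R\<^sup>2 - 2 * \<gamma> * (m * inner w v + inner w e) + \<gamma>\<^sup>2 * (norm (m *\<^sub>R v + e))\<^sup>2"
    by (simp add: power2_norm_diff_scaleR R_def inner_add_right)
  ultimately show ?thesis using inner by (simp add: R_def E_def algebra_simps)
qed

lemma perturbed_step_contraction:
  fixes w v e :: "'a::real_inner"
  assumes mu: "\<mu> > 0" and m: "m > 0" and gam: "\<gamma> \<ge> 0" and mu_le_L: "\<mu> \<le> L"
    and step: "30 * \<gamma> * m * L\<^sup>2 \<le> \<mu>"
    and mon: "\<mu> * (norm w)\<^sup>2 \<le> inner v w" and bdd: "norm v \<le> L * norm w"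
  shows "(norm (w - \<gamma> *\<^sub>R (m *\<^sub>R v + e)))\<^sup>2
           \<le> (1 - 7/8 * (\<gamma> * m * \<mu>)) * (norm w)\<^sup>2 + 3/2 * (\<gamma> / (m * \<mu>)) * (norm e)\<^sup>2"
proof -
  define R E a c where "R = norm w" and "E = norm e" and "a = \<gamma> * m * \<mu>" and "c = \<gamma> / (m * \<mu>)"
  have "30 * \<gamma> * m * L * L \<le> 1 * L" using step mu_le_L by (simp add: power2_eq_square)
  then have "30 * (\<gamma> * m * L) \<le> 1" using mu mu_le_L by simp
  moreover have "\<gamma> * m * \<mu> \<le> \<gamma> * m * L" using gam m mu_le_L by (simp add: mult_left_mono)
  ultimately have a30: "30 * a \<le> 1" by (simp add: a_def)
  have c0: "c \<ge> 0" using gam m mu by (simp add: c_def)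
  have young: "\<gamma> * (2 * R * E) \<le> a * R\<^sup>2 + c * E\<^sup>2"
  proof -
    have "2 * (m * \<mu>) * (R * E) \<le> (m * \<mu>)\<^sup>2 * R\<^sup>2 + E\<^sup>2"
      using zero_le_power2[of "m * \<mu> * R - E"] by (simp add: power2_eq_square algebra_simps)
    then have "c * (2 * (m * \<mu>) * (R * E)) \<le> c * ((m * \<mu>)\<^sup>2 * R\<^sup>2 + E\<^sup>2)"
      using c0 by (rule mult_left_mono)
    then show ?thesis using m mu by (simp add: a_def c_def power2_eq_square field_simps)
  qed
  have "\<gamma>\<^sup>2 * (2 * m\<^sup>2 * L\<^sup>2 * R\<^sup>2) = 2 * a * ((\<gamma> * m * L\<^sup>2) / \<mu>) * R\<^sup>2"
    using mu by (simp add: a_def power2_eq_square field_simps)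
  also have "\<dots> \<le> 2 * a * (1 / 30) * R\<^sup>2"
    using step mu gam m by (intro mult_right_mono mult_left_mono) (auto simp: a_def field_simps)
  finally have drift: "\<gamma>\<^sup>2 * (2 * m\<^sup>2 * L\<^sup>2 * R\<^sup>2) \<le> a / 15 * R\<^sup>2" by simp
  have "2 * \<gamma>\<^sup>2 = 2 * a * c" using m mu by (simp add: a_def c_def power2_eq_square field_simps)
  then have noise: "2 * \<gamma>\<^sup>2 * E\<^sup>2 \<le> c / 15 * E\<^sup>2"
    using mult_right_mono[OF a30, of "c * E\<^sup>2"] c0 by simp
  have "0 \<le> a * R\<^sup>2" "0 \<le> c * E\<^sup>2" using a30 c0 gam m mu by (simp_all add: a_def)
  then show ?thesis
    using norm_perturbed_step_power2_le[OF gam _ mon bdd, of m e] m young drift noise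
    unfolding a_def c_def R_def E_def by (simp add: algebra_simps)
qed

definition ieg_inner :: "(nat \<Rightarrow> 'a::real_vector \<Rightarrow> 'a) \<Rightarrow> real \<Rightarrow> real \<Rightarrow> 'a \<Rightarrow> nat \<Rightarrow> 'a" where
  "ieg_inner F \<gamma>1 \<gamma>2 z i = fold (ieg_step F \<gamma>1 \<gamma>2) [0..<i] z"

definition ieg_extrapolation :: "(nat \<Rightarrow> 'a::real_vector \<Rightarrow> 'a) \<Rightarrow> real \<Rightarrow> real \<Rightarrow> 'a \<Rightarrow> nat \<Rightarrow> 'a" where
  "ieg_extrapolation F \<gamma>1 \<gamma>2 z i =
     ieg_inner F \<gamma>1 \<gamma>2 z i - \<gamma>2 *\<^sub>R F (Suc i) (ieg_inner F \<gamma>1 \<gamma>2 z i)"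

lemma ieg_inner_0 [simp]: "ieg_inner F \<gamma>1 \<gamma>2 z 0 = z"
  by (simp add: ieg_inner_def)

lemma ieg_inner_Suc:
  "ieg_inner F \<gamma>1 \<gamma>2 z (Suc i) =
     ieg_inner F \<gamma>1 \<gamma>2 z i - \<gamma>1 *\<^sub>R F (Suc i) (ieg_extrapolation F \<gamma>1 \<gamma>2 z i)"
  by (simp add: ieg_inner_def ieg_extrapolation_def ieg_step_def Let_def)

lemma ieg_epoch_eq_ieg_inner: "ieg_epoch n F \<gamma>1 \<gamma>2 z = ieg_inner F \<gamma>1 \<gamma>2 z n"
  by (simp add: ieg_epoch_def ieg_inner_def)

lemma ieg_inner_eq_sum:
  "ieg_inner F \<gamma>1 \<gamma>2 z i = z - \<gamma>1 *\<^sub>R (\<Sum>j<i. F (Suc j) (ieg_extrapolation F \<gamma>1 \<gamma>2 z j))"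
  by (induction i) (simp_all add: ieg_inner_Suc algebra_simps)

lemma lipschitz_on_norm_le:
  assumes "lipschitz_on L UNIV f"
  shows "norm (f y) \<le> L * norm (y - x) + norm (f x)"
  using lipschitz_on_normD[OF assms, of y x] norm_triangle_ineq2[of "f y" "f x"] by simp

lemma norm_ieg_extrapolation_sub_le:
  assumes "lipschitz_on L UNIV (F (Suc j))" "\<gamma>2 \<ge> 0"
  shows "norm (ieg_extrapolation F \<gamma>1 \<gamma>2 z j - z)
           \<le> (1 + \<gamma>2 * L) * norm (ieg_inner F \<gamma>1 \<gamma>2 z j - z) + \<gamma>2 * norm (F (Suc j) z)"
proof -
  let ?y = "ieg_inner F \<gamma>1 \<gamma>2 z j"
  have "norm (ieg_extrapolation F \<gamma>1 \<gamma>2 z j - z) \<le> norm (?y - z) + \<gamma>2 * norm (F (Suc j) ?y)"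
    using norm_triangle_ineq4[of "?y - z" "\<gamma>2 *\<^sub>R F (Suc j) ?y"] assms(2)
    by (simp add: ieg_extrapolation_def algebra_simps)
  also have "\<dots> \<le> norm (?y - z) + \<gamma>2 * (L * norm (?y - z) + norm (F (Suc j) z))"
    using lipschitz_on_norm_le[OF assms(1)] assms(2) by (simp add: mult_left_mono)
  finally show ?thesis by (simp add: algebra_simps)
qed

lemma norm_ieg_inner_Suc_sub_le:
  assumes "lipschitz_on L UNIV (F (Suc j))" "\<gamma>1 \<ge> 0"
  shows "norm (ieg_inner F \<gamma>1 \<gamma>2 z (Suc j) - z)
           \<le> norm (ieg_inner F \<gamma>1 \<gamma>2 z j - z)
             + \<gamma>1 * (L * norm (ieg_extrapolation F \<gamma>1 \<gamma>2 z j - z) + norm (F (Suc j) z))"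
proof -
  let ?y = "ieg_extrapolation F \<gamma>1 \<gamma>2 z j"
  have "norm (ieg_inner F \<gamma>1 \<gamma>2 z (Suc j) - z)
      \<le> norm (ieg_inner F \<gamma>1 \<gamma>2 z j - z) + \<gamma>1 * norm (F (Suc j) ?y)"
    using norm_triangle_ineq4[of "ieg_inner F \<gamma>1 \<gamma>2 z j - z" "\<gamma>1 *\<^sub>R F (Suc j) ?y"] assms(2)
    by (simp add: ieg_inner_Suc algebra_simps)
  moreover have "\<gamma>1 * norm (F (Suc j) ?y) \<le> \<gamma>1 * (L * norm (?y - z) + norm (F (Suc j) z))"
    using lipschitz_on_norm_le[OF assms(1), of ?y z] assms(2) by (rule mult_left_mono)
  ultimately show ?thesis by linarith
qed

lemma ieg_extrapolation_drift_step:
  fixes F :: "nat \<Rightarrow> 'a::real_normed_vector \<Rightarrow> 'a" and z :: 'a and n :: nat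
  defines "T \<equiv> \<Sum>i<n. norm (F (Suc i) z)"
  assumes lip: "\<forall>i\<in>{1..n}. lipschitz_on L UNIV (F i)"
    and gam: "\<gamma> \<ge> 0" and step: "5 * \<gamma> * real n * L \<le> 1" and j: "j < n"
    and inner: "norm (ieg_inner F \<gamma> (2 * \<gamma>) z j - z) \<le> 2 * \<gamma> * T"
  shows "norm (ieg_extrapolation F \<gamma> (2 * \<gamma>) z j - z) \<le> 5 * \<gamma> * T"
proof -
  have lipj: "lipschitz_on L UNIV (F (Suc j))" using lip j by auto
  then have L0: "L \<ge> 0" by (rule lipschitz_on_nonneg)
  have "\<gamma> * L * 1 \<le> \<gamma> * L * real n" using j gam L0 by (intro mult_left_mono) auto
  then have gL: "4 * (\<gamma> * L) \<le> 1" using step by (simp add: ac_simps)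
  have tj: "norm (F (Suc j) z) \<le> T" unfolding T_def using j by (intro member_le_sum) auto
  have "norm (ieg_extrapolation F \<gamma> (2 * \<gamma>) z j - z)
      \<le> (1 + 2 * \<gamma> * L) * (2 * \<gamma> * T) + 2 * \<gamma> * T"
  proof -
    have "(1 + 2 * \<gamma> * L) * norm (ieg_inner F \<gamma> (2 * \<gamma>) z j - z) \<le> (1 + 2 * \<gamma> * L) * (2 * \<gamma> * T)"
      using inner gam L0 by (intro mult_left_mono) auto
    moreover have "2 * \<gamma> * norm (F (Suc j) z) \<le> 2 * \<gamma> * T"
      using tj gam by (intro mult_left_mono) auto
    ultimately show ?thesis
      using norm_ieg_extrapolation_sub_le[of L F j "2 * \<gamma>" \<gamma> z, OF lipj] gam by simp
  qed
  also have "\<dots> = 4 * \<gamma> * T + (4 * (\<gamma> * L)) * (\<gamma> * T)" by (simp add: algebra_simps)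
  also have "\<dots> \<le> 4 * \<gamma> * T + 1 * (\<gamma> * T)"
    using gL gam T_def by (intro add_left_mono mult_right_mono) (auto simp: sum_nonneg)
  finally show ?thesis by (simp add: ac_simps)
qed

lemma ieg_inner_drift:
  fixes F :: "nat \<Rightarrow> 'a::real_normed_vector \<Rightarrow> 'a" and z :: 'a and n :: nat
  defines "T \<equiv> \<Sum>i<n. norm (F (Suc i) z)"
  assumes lip: "\<forall>i\<in>{1..n}. lipschitz_on L UNIV (F i)"
    and gam: "\<gamma> \<ge> 0" and step: "5 * \<gamma> * real n * L \<le> 1" and j: "j \<le> n"
  shows "norm (ieg_inner F \<gamma> (2 * \<gamma>) z j - z) \<le> 2 * \<gamma> * T"
proof -
  define P where "P j = \<gamma> * (\<Sum>i<j. 5 * \<gamma> * L * T + norm (F (Suc i) z))" for j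
  have P_le: "P j \<le> 2 * \<gamma> * T" if "j \<le> n" for j
  proof -
    have T0: "0 \<le> T" by (simp add: T_def sum_nonneg)
    have L0: "0 \<le> L" if "i < n" for i
      using lip that by (auto intro: lipschitz_on_nonneg[of L UNIV "F (Suc i)"])
    have "(\<Sum>i<j. 5 * \<gamma> * L * T + norm (F (Suc i) z)) \<le> (\<Sum>i<n. 5 * \<gamma> * L * T + norm (F (Suc i) z))"
      using that gam T0 L0 by (intro sum_mono2) auto
    also have "\<dots> = (5 * \<gamma> * real n * L) * T + T" by (simp add: T_def sum.distrib)
    also have "\<dots> \<le> 2 * T" using mult_right_mono[OF step T0] by simp
    finally have "\<gamma> * (\<Sum>i<j. 5 * \<gamma> * L * T + norm (F (Suc i) z)) \<le> \<gamma> * (2 * T)"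
      using gam by (rule mult_left_mono)
    then show ?thesis by (simp add: P_def ac_simps)
  qed
  have "norm (ieg_inner F \<gamma> (2 * \<gamma>) z j - z) \<le> P j" using j
  proof (induction j)
    case 0
    then show ?case by (simp add: P_def)
  next
    case (Suc j)
    then have j: "j < n" by simp
    have lipj: "lipschitz_on L UNIV (F (Suc j))" using lip j by auto
    have "norm (ieg_inner F \<gamma> (2 * \<gamma>) z j - z) \<le> 2 * \<gamma> * T"
      using Suc P_le[of j] by simp
    then have "L * norm (ieg_extrapolation F \<gamma> (2 * \<gamma>) z j - z) \<le> L * (5 * \<gamma> * T)"
      using ieg_extrapolation_drift_step[OF lip gam step j] lipschitz_on_nonneg[OF lipj]
      by (simp add: T_def mult_left_mono)
    then have "\<gamma> * (L * norm (ieg_extrapolation F \<gamma> (2 * \<gamma>) z j - z)) \<le> \<gamma> * (L * (5 * \<gamma> * T))"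
      using gam by (rule mult_left_mono)
    then show ?case
      using norm_ieg_inner_Suc_sub_le[of L F j \<gamma> "2 * \<gamma>" z, OF lipj gam] Suc
      by (simp add: P_def algebra_simps)
  qed
  then show ?thesis using P_le[OF j] by simp
qed

lemma ieg_extrapolation_drift:
  fixes F :: "nat \<Rightarrow> 'a::real_normed_vector \<Rightarrow> 'a"
  assumes lip: "\<forall>i\<in>{1..n}. lipschitz_on L UNIV (F i)"
    and gam: "\<gamma> \<ge> 0" and step: "5 * \<gamma> * real n * L \<le> 1" and i: "i < n"
  shows "norm (ieg_extrapolation F \<gamma> (2 * \<gamma>) z i - z) \<le> 5 * \<gamma> * (\<Sum>j<n. norm (F (Suc j) z))"
  using ieg_extrapolation_drift_step[OF lip gam step i] ieg_inner_drift[OF lip gam step] i by simp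

lemma ieg_epoch_perturbed_step:
  fixes F :: "nat \<Rightarrow> 'a::real_normed_vector \<Rightarrow> 'a"
  assumes lip: "\<forall>i\<in>{1..n}. lipschitz_on L UNIV (F i)"
    and gam: "\<gamma> \<ge> 0" and step: "5 * \<gamma> * real n * L \<le> 1"
  obtains e where "ieg_epoch n F \<gamma> (2 * \<gamma>) z = z - \<gamma> *\<^sub>R ((\<Sum>i=1..n. F i z) + e)"
    and "norm e \<le> 5 * \<gamma> * real n * L * (\<Sum>i=1..n. norm (F i z))"
proof -
  define zb where "zb = ieg_extrapolation F \<gamma> (2 * \<gamma>) z"
  define e where "e = (\<Sum>j<n. F (Suc j) (zb j) - F (Suc j) z)"
  have "ieg_epoch n F \<gamma> (2 * \<gamma>) z = z - \<gamma> *\<^sub>R ((\<Sum>j<n. F (Suc j) z) + e)"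
    by (simp add: ieg_epoch_eq_ieg_inner ieg_inner_eq_sum e_def zb_def sum_subtractf)
  then have "ieg_epoch n F \<gamma> (2 * \<gamma>) z = z - \<gamma> *\<^sub>R ((\<Sum>i=1..n. F i z) + e)"
    using sum_bounds_lt_plus1[of "\<lambda>i. F i z" n] by simp
  moreover have "norm e \<le> (\<Sum>j<n. L * (5 * \<gamma> * (\<Sum>i<n. norm (F (Suc i) z))))"
    unfolding e_def
  proof (rule order_trans[OF norm_sum sum_mono])
    fix j assume "j \<in> {..<n}"
    then have j: "j < n" by simp
    then have lipj: "lipschitz_on L UNIV (F (Suc j))" using lip by auto
    show "norm (F (Suc j) (zb j) - F (Suc j) z) \<le> L * (5 * \<gamma> * (\<Sum>i<n. norm (F (Suc i) z)))"
      using lipschitz_on_normD[OF lipj, of "zb j" z] ieg_extrapolation_drift[OF lip gam step j, of z]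
        mult_left_mono[OF _ lipschitz_on_nonneg[OF lipj]]
      by (fastforce simp: zb_def intro: order_trans)
  qed
  then have "norm e \<le> 5 * \<gamma> * real n * L * (\<Sum>i=1..n. norm (F i z))"
    using sum_bounds_lt_plus1[of "\<lambda>i. norm (F i z)" n] by (simp add: algebra_simps)
  ultimately show ?thesis using that by blast
qed

lemma linear_recurrence_le:
  fixes r :: "nat \<Rightarrow> real"
  assumes rec: "\<And>k. r (Suc k) \<le> \<rho> * r k + D" and "0 \<le> \<rho>" "\<rho> < 1" "0 \<le> D"
  shows "r k \<le> \<rho> ^ k * r 0 + D / (1 - \<rho>)"
proof (induction k)
  case 0
  then show ?case using assms by simp
next
  case (Suc k)
  have "r (Suc k) \<le> \<rho> * (\<rho> ^ k * r 0 + D / (1 - \<rho>)) + D"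
    using rec[of k] mult_left_mono[OF Suc \<open>0 \<le> \<rho>\<close>] by linarith
  also have "\<dots> = \<rho> ^ Suc k * r 0 + D / (1 - \<rho>)"
    using \<open>\<rho> < 1\<close> by (simp add: field_simps)
  finally show ?case .
qed

lemma step_size_imp_small_step:
  fixes n :: nat
  assumes "0 \<le> \<gamma>" "0 < L" "0 \<le> c"
    and "\<gamma> \<le> \<mu> / (10 * L\<^sup>2 * sqrt (10 * (real n)\<^sup>2 + c * real n + 29))"
  shows "30 * \<gamma> * real n * L\<^sup>2 \<le> \<mu>"
proof -
  define s where "s = sqrt (10 * (real n)\<^sup>2 + c * real n + 29)"
  have "(3 * real n)\<^sup>2 \<le> 10 * (real n)\<^sup>2 + c * real n + 29"
    using assms(3) by (simp add: power2_eq_square)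
  then have s: "3 * real n \<le> s" unfolding s_def by (rule real_le_rsqrt)
  have "0 < s" using assms(3) by (simp add: s_def add_nonneg_pos)
  then have "\<gamma> * (10 * L\<^sup>2 * s) \<le> \<mu>"
    using assms(2,4) by (simp add: s_def pos_le_divide_eq)
  moreover have "(\<gamma> * 10 * L\<^sup>2) * (3 * real n) \<le> (\<gamma> * 10 * L\<^sup>2) * s"
    using s assms(1) by (intro mult_left_mono) auto
  ultimately show ?thesis by (simp add: algebra_simps)
qed

lemma power_one_minus_le_exp:
  fixes x :: real
  assumes "0 \<le> x" "x \<le> 1"
  shows "(1 - x) ^ k \<le> exp (- (real k * x))"
proof -
  have "(1 - x) ^ k \<le> exp (- x) ^ k"
    using assms exp_minus_ge[of x] by (intro power_mono) auto
  then show ?thesis by (simp add: exp_of_nat_mult[symmetric])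
qed

lemma exp_neg_le_two_div_square:
  fixes t :: real
  assumes "0 < t"
  shows "exp (- t) \<le> 2 / t\<^sup>2"
proof -
  have "t\<^sup>2 / 2 \<le> exp t" using exp_lower_Taylor_quadratic[of t] assms by simp
  then show ?thesis using assms by (simp add: exp_minus field_simps)
qed

lemma power_one_minus_min_le:
  fixes K :: nat and c y :: real
  assumes "0 < c" "1 \<le> K" "real K \<le> y" and x: "x = min c (2 * ln y / real K)" "0 \<le> x" "x \<le> 1"
  shows "(1 - x) ^ K \<le> (1 + 2 / c\<^sup>2) / (real K)\<^sup>2"
proof -
  have K: "0 < real K" using assms(2) by simp
  have "(1 - x) ^ K \<le> exp (- (real K * x))"
    using x by (intro power_one_minus_le_exp)
  also have "\<dots> \<le> (1 + 2 / c\<^sup>2) / (real K)\<^sup>2"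
  proof (cases "c \<le> 2 * ln y / real K")
    case True
    then have "x = c" using x by simp
    then have "exp (- (real K * x)) \<le> 2 / (real K * c)\<^sup>2"
      using exp_neg_le_two_div_square[of "real K * c"] assms(1) K by simp
    also have "\<dots> \<le> (1 + 2 / c\<^sup>2) / (real K)\<^sup>2"
      using K by (simp add: power_mult_distrib field_simps)
    finally show ?thesis .
  next
    case False
    have y: "0 < y" using assms(3) K by linarith
    have "real K * x = ln (y\<^sup>2)" using False x K y by (simp add: ln_realpow)
    then have "exp (- (real K * x)) = 1 / y\<^sup>2" using y by (simp add: exp_minus inverse_eq_divide)
    also have "\<dots> \<le> 1 / (real K)\<^sup>2"
      using K assms(3) by (intro divide_left_mono power_mono) auto
    also have "\<dots> \<le> (1 + 2 / c\<^sup>2) / (real K)\<^sup>2"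
      by (intro divide_right_mono) auto
    finally show ?thesis .
  qed
  finally show ?thesis .
qed

lemma ln_mult_le:
  fixes x y :: real
  assumes "1 \<le> x" "1 \<le> y"
  shows "ln (x * y) \<le> (1 + ln x) * (1 + ln y)"
proof -
  have "0 \<le> ln x * ln y" using assms by simp
  then show ?thesis using assms by (simp add: ln_mult algebra_simps)
qed

definition decreasing_step :: "real \<Rightarrow> real \<Rightarrow> nat \<Rightarrow> nat \<Rightarrow> real" where
  "decreasing_step a \<mu> n K = min a (4 * ln (sqrt (real n) * real K) / (\<mu> * real n * real K))"

lemma decreasing_step_pos:
  assumes "0 < a" "0 < \<mu>" "2 \<le> n" "1 \<le> K"
  shows "0 < decreasing_step a \<mu> n K"
proof -
  have "1 < sqrt (real n) * real K"
    using assms(3,4) less_le_trans[of 1 "sqrt (real n)" "sqrt (real n) * real K"] by simp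
  then show ?thesis using assms by (simp add: decreasing_step_def)
qed

lemma decreasing_step_le_log:
  assumes "0 < \<mu>" "1 \<le> n" "1 \<le> K"
  shows "decreasing_step a \<mu> n K
           \<le> 4 * ((1 + ln (sqrt (real n))) * (1 + ln (real K))) / (\<mu> * real n * real K)"
proof -
  have "decreasing_step a \<mu> n K \<le> 4 * ln (sqrt (real n) * real K) / (\<mu> * real n * real K)"
    by (simp add: decreasing_step_def)
  also have "\<dots> \<le> 4 * ((1 + ln (sqrt (real n))) * (1 + ln (real K))) / (\<mu> * real n * real K)"
    using ln_mult_le[of "sqrt (real n)" "real K"] assms by (intro divide_right_mono mult_left_mono) auto
  finally show ?thesis .
qed

lemma power_decreasing_step_le:
  assumes "0 < a" "0 < \<mu>" "2 \<le> n" "1 \<le> K" and small: "decreasing_step a \<mu> n K * real n * \<mu> \<le> 2"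
  shows "(1 - decreasing_step a \<mu> n K * real n * \<mu> / 2) ^ K \<le> (1 + 2 / (a * real n * \<mu> / 2)\<^sup>2) / (real K)\<^sup>2"
proof (rule power_one_minus_min_le)
  let ?y = "sqrt (real n) * real K"
  show "real K \<le> ?y" using assms(3,4) mult_right_mono[of 1 "sqrt (real n)" "real K"] by simp
  have "decreasing_step a \<mu> n K * real n * \<mu> / 2
      = min (a * (real n * \<mu> / 2)) (4 * ln ?y / (\<mu> * real n * real K) * (real n * \<mu> / 2))"
    using assms by (simp add: decreasing_step_def min_mult_distrib_right)
  also have "4 * ln ?y / (\<mu> * real n * real K) * (real n * \<mu> / 2) = 2 * ln ?y / real K"
    using assms by (simp add: field_simps)
  finally show "decreasing_step a \<mu> n K * real n * \<mu> / 2 = min (a * real n * \<mu> / 2) (2 * ln ?y / real K)"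
    by simp
qed (use assms decreasing_step_pos[OF assms(1-4)] in auto)

locale ieg_problem =
  fixes n :: nat and F :: "nat \<Rightarrow> 'a::euclidean_space \<Rightarrow> 'a" and L \<mu> :: real and zs :: 'a
  assumes n_pos: "n > 0" and mu_pos: "\<mu> > 0"
    and smon: "strongly_monotone \<mu> (avg_op n F)"
    and lip: "\<forall>i\<in>{1..n}. lipschitz_on L UNIV (F i)"
    and sol: "avg_op n F zs = 0"
begin

lemma sum_eq_scaleR_avg_op: "(\<Sum>i=1..n. F i z) = real n *\<^sub>R avg_op n F z"
  using n_pos by (simp add: avg_op_def)

lemma norm_avg_op_le: "norm (avg_op n F z) \<le> L * norm (z - zs)"
proof -
  have "real n * norm (avg_op n F z) = norm (\<Sum>i=1..n. F i z - F i zs)"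
    unfolding sum_subtractf sum_eq_scaleR_avg_op sol by simp
  also have "\<dots> \<le> (\<Sum>i=1..n. L * norm (z - zs))"
    using lip by (intro order_trans[OF norm_sum] sum_mono lipschitz_on_normD) auto
  also have "\<dots> = real n * (L * norm (z - zs))" by simp
  finally show ?thesis using n_pos by simp
qed

lemma strongly_monotone_at_solution: "\<mu> * (norm (z - zs))\<^sup>2 \<le> inner (avg_op n F z) (z - zs)"
  using smon sol unfolding strongly_monotone_def by (metis diff_zero)

lemma mu_le_L: "\<mu> \<le> L"
proof -
  obtain b :: 'a where b: "b \<in> Basis" using nonempty_Basis by blast
  then have "\<mu> * (norm b)\<^sup>2 \<le> inner (avg_op n F (zs + b)) b"
    using strongly_monotone_at_solution[of "zs + b"] by simp
  also have "\<dots> \<le> norm (avg_op n F (zs + b)) * norm b" by (rule norm_cauchy_schwarz)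
  also have "\<dots> \<le> L * norm b" using norm_avg_op_le[of "zs + b"] b by simp
  finally show ?thesis using b by simp
qed

lemma L_pos: "L > 0"
  using mu_le_L mu_pos by linarith

lemma small_step_bounds:
  assumes "\<gamma> \<ge> 0" and "30 * \<gamma> * real n * L\<^sup>2 \<le> \<mu>"
  shows "30 * \<gamma> * real n * L \<le> 1" and "30 * (\<gamma> * real n * \<mu>) \<le> 1"
proof -
  have "(30 * \<gamma> * real n * L) * L \<le> 1 * L"
    using assms mu_le_L by (simp add: power2_eq_square mult.assoc)
  then show L: "30 * \<gamma> * real n * L \<le> 1" using L_pos by simp
  have "\<gamma> * real n * \<mu> \<le> \<gamma> * real n * L" using assms mu_le_L by (simp add: mult_left_mono)
  then show "30 * (\<gamma> * real n * \<mu>) \<le> 1" using L by linarith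
qed

lemma sum_norm_F_sq_le:
  "(\<Sum>i=1..n. norm (F i z))\<^sup>2
     \<le> 2 * (real n * L * norm (z - zs))\<^sup>2 + 2 * real n * (\<Sum>i=1..n. (norm (F i zs))\<^sup>2)"
proof -
  define G where "G = (\<Sum>i=1..n. norm (F i zs))"
  have "(\<Sum>i=1..n. norm (F i z)) \<le> (\<Sum>i=1..n. L * norm (z - zs) + norm (F i zs))"
    using lip by (intro sum_mono lipschitz_on_norm_le) auto
  also have "\<dots> = real n * L * norm (z - zs) + G" by (simp add: G_def sum.distrib)
  finally have "(\<Sum>i=1..n. norm (F i z))\<^sup>2 \<le> (real n * L * norm (z - zs) + G)\<^sup>2"
    by (intro power_mono) (auto simp: sum_nonneg)
  also have "\<dots> \<le> 2 * (real n * L * norm (z - zs))\<^sup>2 + 2 * G\<^sup>2"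
    using zero_le_power2[of "real n * L * norm (z - zs) - G"] by (simp add: power2_eq_square algebra_simps)
  also have "G\<^sup>2 \<le> real n * (\<Sum>i=1..n. (norm (F i zs))\<^sup>2)"
    using sum_squared_le_sum_of_squares[of "\<lambda>i. norm (F i zs)" "{1..n}"] by (simp add: G_def mult.commute)
  finally show ?thesis by simp
qed

lemma perturbation_power2_le:
  assumes gam: "\<gamma> \<ge> 0" and step: "30 * \<gamma> * real n * L\<^sup>2 \<le> \<mu>"
    and e: "norm e \<le> 5 * \<gamma> * real n * L * (\<Sum>i=1..n. norm (F i z))"
  shows "3/2 * (\<gamma> / (real n * \<mu>)) * (norm e)\<^sup>2
           \<le> 1/12 * (\<gamma> * real n * \<mu>) * (norm (z - zs))\<^sup>2
             + 75 * \<gamma> ^ 3 * (real n)\<^sup>2 * L\<^sup>2 * (\<Sum>i=1..n. (norm (F i zs))\<^sup>2) / \<mu>"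
proof -
  define R S a q where "R = norm (z - zs)" and "S = (\<Sum>i=1..n. (norm (F i zs))\<^sup>2)"
    and "a = \<gamma> * real n * \<mu>" and "q = \<gamma> * real n * L\<^sup>2 / \<mu>"
  have "(norm e)\<^sup>2 \<le> (5 * \<gamma> * real n * L * (\<Sum>i=1..n. norm (F i z)))\<^sup>2"
    using e by (intro power_mono) auto
  also have "\<dots> \<le> (5 * \<gamma> * real n * L)\<^sup>2 * (2 * (real n * L * R)\<^sup>2 + 2 * real n * S)"
    unfolding power_mult_distrib[of "5 * \<gamma> * real n * L"] R_def S_def
    by (intro mult_left_mono sum_norm_F_sq_le) auto
  finally have "3/2 * (\<gamma> / (real n * \<mu>)) * (norm e)\<^sup>2
      \<le> 3/2 * (\<gamma> / (real n * \<mu>)) * ((5 * \<gamma> * real n * L)\<^sup>2 * (2 * (real n * L * R)\<^sup>2 + 2 * real n * S))"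
    using gam mu_pos by (intro mult_left_mono) auto
  also have "\<dots> = 75 * q\<^sup>2 * (a * R\<^sup>2) + 75 * \<gamma> ^ 3 * (real n)\<^sup>2 * L\<^sup>2 * S / \<mu>"
    using n_pos mu_pos by (simp add: a_def q_def field_simps power2_eq_square power3_eq_cube)
  also have "75 * q\<^sup>2 * (a * R\<^sup>2) \<le> 75 * (1/30)\<^sup>2 * (a * R\<^sup>2)"
  proof -
    have "q \<le> 1/30" using step mu_pos by (simp add: q_def field_simps)
    moreover have "0 \<le> q" using gam mu_pos by (simp add: q_def)
    ultimately show ?thesis
      using gam mu_pos by (intro mult_right_mono mult_left_mono power_mono) (auto simp: a_def)
  qed
  finally show ?thesis by (simp add: a_def R_def S_def power_divide)
qed

lemma epoch_contraction:
  assumes gam: "\<gamma> \<ge> 0" and step: "30 * \<gamma> * real n * L\<^sup>2 \<le> \<mu>"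
  shows "(norm (ieg_epoch n F \<gamma> (2 * \<gamma>) z - zs))\<^sup>2
           \<le> (1 - 3/4 * (\<gamma> * real n * \<mu>)) * (norm (z - zs))\<^sup>2
             + 75 * \<gamma> ^ 3 * (real n)\<^sup>2 * L\<^sup>2 * (\<Sum>i=1..n. (norm (F i zs))\<^sup>2) / \<mu>"
proof -
  define R a where "R = norm (z - zs)" and "a = \<gamma> * real n * \<mu>"
  have "5 * \<gamma> * real n * L \<le> 1" using small_step_bounds(1)[OF gam step] gam L_pos by simp
  then obtain e where epoch: "ieg_epoch n F \<gamma> (2 * \<gamma>) z = z - \<gamma> *\<^sub>R ((\<Sum>i=1..n. F i z) + e)"
    and e: "norm e \<le> 5 * \<gamma> * real n * L * (\<Sum>i=1..n. norm (F i z))"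
    using ieg_epoch_perturbed_step[OF lip gam] by blast
  have "(norm (ieg_epoch n F \<gamma> (2 * \<gamma>) z - zs))\<^sup>2
      = (norm ((z - zs) - \<gamma> *\<^sub>R (real n *\<^sub>R avg_op n F z + e)))\<^sup>2"
    unfolding epoch sum_eq_scaleR_avg_op by (simp add: algebra_simps)
  also have "\<dots> \<le> (1 - 7/8 * a) * R\<^sup>2 + 3/2 * (\<gamma> / (real n * \<mu>)) * (norm e)\<^sup>2"
    unfolding a_def R_def
    by (rule perturbed_step_contraction[OF mu_pos _ gam mu_le_L step])
       (use n_pos strongly_monotone_at_solution norm_avg_op_le in \<open>auto simp: inner_commute\<close>)
  finally have "(norm (ieg_epoch n F \<gamma> (2 * \<gamma>) z - zs))\<^sup>2
       \<le> R\<^sup>2 - 7/8 * (a * R\<^sup>2) + 3/2 * (\<gamma> / (real n * \<mu>)) * (norm e)\<^sup>2"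
    by (simp add: algebra_simps)
  moreover have "0 \<le> a * R\<^sup>2" using gam mu_pos by (simp add: a_def)
  ultimately show ?thesis
    using perturbation_power2_le[OF gam step e] by (simp add: a_def R_def algebra_simps)
qed

lemma ieg_error_bound:
  assumes gam: "\<gamma> > 0" and step: "30 * \<gamma> * real n * L\<^sup>2 \<le> \<mu>"
  shows "(norm (ieg n F \<gamma> (2 * \<gamma>) z0 k - zs))\<^sup>2
           \<le> (1 - 3/4 * (\<gamma> * real n * \<mu>)) ^ k * (norm (z0 - zs))\<^sup>2
             + 100 * \<gamma>\<^sup>2 * real n * L\<^sup>2 * (\<Sum>i=1..n. (norm (F i zs))\<^sup>2) / \<mu>\<^sup>2"
proof -
  define r where "r k = (norm (ieg n F \<gamma> (2 * \<gamma>) z0 k - zs))\<^sup>2" for k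
  define \<rho> where "\<rho> = 1 - 3/4 * (\<gamma> * real n * \<mu>)"
  define D where "D = 75 * \<gamma> ^ 3 * (real n)\<^sup>2 * L\<^sup>2 * (\<Sum>i=1..n. (norm (F i zs))\<^sup>2) / \<mu>"
  have a: "0 < \<gamma> * real n * \<mu>" "30 * (\<gamma> * real n * \<mu>) \<le> 1"
    using gam n_pos mu_pos small_step_bounds(2)[OF _ step] by auto
  have "r k \<le> \<rho> ^ k * r 0 + D / (1 - \<rho>)"
  proof (rule linear_recurrence_le)
    show "r (Suc k) \<le> \<rho> * r k + D" for k
      unfolding r_def \<rho>_def D_def ieg_def funpow.simps comp_def
      using epoch_contraction[OF less_imp_le[OF gam] step] .
    show "0 \<le> \<rho>" "\<rho> < 1" using a by (simp_all add: \<rho>_def)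
    show "0 \<le> D" using gam mu_pos by (simp add: D_def sum_nonneg)
  qed
  also have "D / (1 - \<rho>) = 100 * \<gamma>\<^sup>2 * real n * L\<^sup>2 * (\<Sum>i=1..n. (norm (F i zs))\<^sup>2) / \<mu>\<^sup>2"
    using gam n_pos mu_pos by (simp add: D_def \<rho>_def field_simps power2_eq_square power3_eq_cube)
  finally show ?thesis by (simp add: r_def \<rho>_def ieg_def)
qed

lemma ieg_linear_convergence:
  assumes n2: "n \<ge> 2" and gam: "\<gamma> > 0"
    and step: "\<gamma> \<le> \<mu> / (10 * L\<^sup>2 * sqrt (10 * (real n)\<^sup>2 + real n + 29))"
  shows "(norm (ieg n F \<gamma> (2 * \<gamma>) z0 k - zs))\<^sup>2
           \<le> (1 - \<gamma> * real n * \<mu> / 4) ^ k * (norm (z0 - zs))\<^sup>2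
             + 48 * L\<^sup>2 / \<mu>\<^sup>2 * (6 * real n * (real n - 1) * \<gamma>\<^sup>2 + (2 * \<gamma>)\<^sup>2)
               * ((1 / real n) * (\<Sum>i=1..n. (norm (F i zs))\<^sup>2))"
proof -
  define S where "S = (\<Sum>i=1..n. (norm (F i zs))\<^sup>2)"
  have step': "30 * \<gamma> * real n * L\<^sup>2 \<le> \<mu>"
    using step_size_imp_small_step[of \<gamma> L 1] gam L_pos step by simp
  have a: "30 * (\<gamma> * real n * \<mu>) \<le> 1" using small_step_bounds(2)[OF _ step'] gam by simp
  have "(1 - 3/4 * (\<gamma> * real n * \<mu>)) ^ k \<le> (1 - \<gamma> * real n * \<mu> / 4) ^ k"
    using a gam n_pos mu_pos by (intro power_mono) auto
  then have rate: "(1 - 3/4 * (\<gamma> * real n * \<mu>)) ^ k * (norm (z0 - zs))\<^sup>2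
      \<le> (1 - \<gamma> * real n * \<mu> / 4) ^ k * (norm (z0 - zs))\<^sup>2"
    by (rule mult_right_mono) simp
  have "100 * (real n)\<^sup>2 \<le> 48 * (6 * real n * (real n - 1) + 4)"
  proof -
    have "2 * real n \<le> real n * real n" using n2 by (intro mult_right_mono) auto
    then show ?thesis by (simp add: power2_eq_square algebra_simps)
  qed
  then have "100 * (real n)\<^sup>2 * (\<gamma>\<^sup>2 * L\<^sup>2 * S / (real n * \<mu>\<^sup>2))
      \<le> 48 * (6 * real n * (real n - 1) + 4) * (\<gamma>\<^sup>2 * L\<^sup>2 * S / (real n * \<mu>\<^sup>2))"
    by (rule mult_right_mono) (simp add: S_def sum_nonneg)
  then have noise: "100 * \<gamma>\<^sup>2 * real n * L\<^sup>2 * S / \<mu>\<^sup>2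
      \<le> 48 * L\<^sup>2 / \<mu>\<^sup>2 * (6 * real n * (real n - 1) * \<gamma>\<^sup>2 + (2 * \<gamma>)\<^sup>2) * ((1 / real n) * S)"
    using n_pos by (simp add: power2_eq_square field_simps)
  show ?thesis
    using ieg_error_bound[OF gam step', of z0 k] rate noise by (simp add: S_def)
qed

lemma ieg_decreasing_step_bound:
  assumes n2: "n \<ge> 2" and K: "K \<ge> 1"
    and a: "a = \<mu> / (10 * L\<^sup>2 * sqrt (10 * (real n)\<^sup>2 + 2 * real n + 29))"
  defines "\<gamma> \<equiv> decreasing_step a \<mu> n K"
  shows "(norm (ieg n F \<gamma> (2 * \<gamma>) z0 K - zs))\<^sup>2
           \<le> ((1 + 2 / (a * real n * \<mu> / 2)\<^sup>2) * (norm (z0 - zs))\<^sup>2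
               + 1600 * L\<^sup>2 * (1 + ln (sqrt (real n)))\<^sup>2 * (\<Sum>i=1..n. (norm (F i zs))\<^sup>2) / (\<mu> ^ 4 * real n))
             * ((1 + ln (real K))\<^sup>2 / (real K)\<^sup>2)"
proof -
  define S l where "S = (\<Sum>i=1..n. (norm (F i zs))\<^sup>2)" and "l = (1 + ln (real K))\<^sup>2 / (real K)\<^sup>2"
  have a_pos: "0 < a" using a mu_pos L_pos by (simp add: add_nonneg_pos)
  have gam_pos: "0 < \<gamma>" unfolding \<gamma>_def using decreasing_step_pos[OF a_pos mu_pos n2 K] .
  have step: "30 * \<gamma> * real n * L\<^sup>2 \<le> \<mu>"
    using step_size_imp_small_step[of \<gamma> L 2] gam_pos L_pos a by (simp add: \<gamma>_def decreasing_step_def)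
  have small: "30 * (\<gamma> * real n * \<mu>) \<le> 1" using small_step_bounds(2)[OF _ step] gam_pos by simp
  have "(1 - 3/4 * (\<gamma> * real n * \<mu>)) ^ K \<le> (1 - \<gamma> * real n * \<mu> / 2) ^ K"
    using small gam_pos n_pos mu_pos by (intro power_mono) auto
  also have "\<dots> \<le> (1 + 2 / (a * real n * \<mu> / 2)\<^sup>2) * (1 / (real K)\<^sup>2)"
    using power_decreasing_step_le[OF a_pos mu_pos n2 K] small by (simp add: \<gamma>_def)
  also have "\<dots> \<le> (1 + 2 / (a * real n * \<mu> / 2)\<^sup>2) * l"
    using K unfolding l_def by (intro mult_left_mono divide_right_mono) (auto simp: one_le_power)
  finally have "(1 - 3/4 * (\<gamma> * real n * \<mu>)) ^ K \<le> (1 + 2 / (a * real n * \<mu> / 2)\<^sup>2) * l" .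
  then have rate: "(1 - 3/4 * (\<gamma> * real n * \<mu>)) ^ K * (norm (z0 - zs))\<^sup>2
      \<le> (1 + 2 / (a * real n * \<mu> / 2)\<^sup>2) * l * (norm (z0 - zs))\<^sup>2"
    by (rule mult_right_mono) simp_all
  have "\<gamma>\<^sup>2 \<le> (4 * ((1 + ln (sqrt (real n))) * (1 + ln (real K))) / (\<mu> * real n * real K))\<^sup>2"
    using decreasing_step_le_log[OF mu_pos _ K] n2 gam_pos by (intro power_mono) (auto simp: \<gamma>_def)
  then have "(100 * real n * L\<^sup>2 * S / \<mu>\<^sup>2) * \<gamma>\<^sup>2
      \<le> (100 * real n * L\<^sup>2 * S / \<mu>\<^sup>2)
          * (4 * ((1 + ln (sqrt (real n))) * (1 + ln (real K))) / (\<mu> * real n * real K))\<^sup>2"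
    by (rule mult_left_mono) (simp add: S_def sum_nonneg)
  also have "\<dots> = 1600 * L\<^sup>2 * (1 + ln (sqrt (real n)))\<^sup>2 * S / (\<mu> ^ 4 * real n) * l"
  proof -
    have "(100 * real n * L\<^sup>2 * S / \<mu>\<^sup>2) * (4 * (u * v) / (\<mu> * real n * real K))\<^sup>2
        = 1600 * L\<^sup>2 * u\<^sup>2 * S / (\<mu> ^ 4 * real n) * (v\<^sup>2 / (real K)\<^sup>2)" for u v
      using mu_pos n_pos K
      by (simp add: power_mult_distrib power_divide field_simps power2_eq_square eval_nat_numeral)
    then show ?thesis unfolding l_def .
  qed
  finally have noise: "100 * \<gamma>\<^sup>2 * real n * L\<^sup>2 * S / \<mu>\<^sup>2
      \<le> 1600 * L\<^sup>2 * (1 + ln (sqrt (real n)))\<^sup>2 * S / (\<mu> ^ 4 * real n) * l"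
    by (simp add: ac_simps)
  show ?thesis
    using ieg_error_bound[OF gam_pos step, of z0 K] rate noise by (simp add: S_def l_def algebra_simps)
qed

(* The bound is in fact O(log^2 K / K^2). *)
lemma ieg_decreasing_step_rate:
  assumes n2: "n \<ge> 2"
  shows "\<exists>C (p::nat). \<forall>K::nat. K \<ge> 1 \<longrightarrow>
       (let \<gamma>1 = min (\<mu> / (10 * L\<^sup>2 * sqrt (10 * (real n)\<^sup>2 + 2 * real n + 29)))
                       (4 * ln (sqrt (real n) * real K) / (\<mu> * real n * real K))
        in (norm (ieg n F \<gamma>1 (2 * \<gamma>1) z0 K - zs))\<^sup>2
           \<le> C * (1 + ln (real K)) ^ p * (exp (- real K * \<mu>\<^sup>2 / L\<^sup>2) + 1 / (real K)\<^sup>2))"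
proof (intro exI allI impI)
  define a0 where "a0 = \<mu> / (10 * L\<^sup>2 * sqrt (10 * (real n)\<^sup>2 + 2 * real n + 29))"
  define C where "C = (1 + 2 / (a0 * real n * \<mu> / 2)\<^sup>2) * (norm (z0 - zs))\<^sup>2
    + 1600 * L\<^sup>2 * (1 + ln (sqrt (real n)))\<^sup>2 * (\<Sum>i=1..n. (norm (F i zs))\<^sup>2) / (\<mu> ^ 4 * real n)"
  fix K :: nat
  assume K: "K \<ge> 1"
  define \<gamma> where "\<gamma> = decreasing_step a0 \<mu> n K"
  have "(1 + ln (real K))\<^sup>2 * (1 / (real K)\<^sup>2)
      \<le> (1 + ln (real K))\<^sup>2 * (exp (- real K * \<mu>\<^sup>2 / L\<^sup>2) + 1 / (real K)\<^sup>2)"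
    by (intro mult_left_mono) auto
  moreover have "C \<ge> 0" using mu_pos by (simp add: C_def sum_nonneg)
  ultimately have "C * ((1 + ln (real K))\<^sup>2 * (1 / (real K)\<^sup>2))
      \<le> C * ((1 + ln (real K))\<^sup>2 * (exp (- real K * \<mu>\<^sup>2 / L\<^sup>2) + 1 / (real K)\<^sup>2))"
    by (rule mult_left_mono)
  then have "C * ((1 + ln (real K))\<^sup>2 / (real K)\<^sup>2)
      \<le> C * (1 + ln (real K))\<^sup>2 * (exp (- real K * \<mu>\<^sup>2 / L\<^sup>2) + 1 / (real K)\<^sup>2)"
    by (simp add: mult.assoc)
  then have "(norm (ieg n F \<gamma> (2 * \<gamma>) z0 K - zs))\<^sup>2
      \<le> C * (1 + ln (real K))\<^sup>2 * (exp (- real K * \<mu>\<^sup>2 / L\<^sup>2) + 1 / (real K)\<^sup>2)"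
    using ieg_decreasing_step_bound[OF n2 K a0_def, of z0] unfolding C_def \<gamma>_def by linarith
  then show "let \<gamma>1 = min (\<mu> / (10 * L\<^sup>2 * sqrt (10 * (real n)\<^sup>2 + 2 * real n + 29)))
                       (4 * ln (sqrt (real n) * real K) / (\<mu> * real n * real K))
        in (norm (ieg n F \<gamma>1 (2 * \<gamma>1) z0 K - zs))\<^sup>2
           \<le> C * (1 + ln (real K)) ^ 2 * (exp (- real K * \<mu>\<^sup>2 / L\<^sup>2) + 1 / (real K)\<^sup>2)"
    by (simp add: Let_def \<gamma>_def a0_def decreasing_step_def)
qed

end

theorem corollary2:
  fixes n :: nat and F :: "nat \<Rightarrow> 'a::euclidean_space \<Rightarrow> 'a"
    and L :: "nat \<Rightarrow> real" and \<mu> :: real and zs z0 :: 'a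
  assumes n2: "n \<ge> 2"
    and mu_pos: "\<mu> > 0"
    and smon: "strongly_monotone \<mu> (avg_op n F)"
    and lip: "\<forall>i\<in>{1..n}. lipschitz_on (L i) UNIV (F i)"
    and sol: "avg_op n F zs = 0"
  defines "Lmax \<equiv> Max (L ` {1..n})"
    and "\<sigma>2 \<equiv> (1 / real n) * (\<Sum>i=1..n. (norm (F i zs))\<^sup>2)"
  shows
    "(\<forall>\<gamma>1 \<gamma>2. \<gamma>1 > 0 \<and> \<gamma>2 = 2 * \<gamma>1 \<and>
         \<gamma>1 \<le> \<mu> / (10 * Lmax\<^sup>2 * sqrt (10 * (real n)\<^sup>2 + real n + 29)) \<longrightarrow>
       (\<forall>k. (norm (ieg n F \<gamma>1 \<gamma>2 z0 k - zs))\<^sup>2 \<le>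
              (1 - \<gamma>1 * real n * \<mu> / 4) ^ k * (norm (z0 - zs))\<^sup>2
              + 48 * Lmax\<^sup>2 / \<mu>\<^sup>2 * (6 * real n * (real n - 1) * \<gamma>1\<^sup>2 + \<gamma>2\<^sup>2) * \<sigma>2))
     \<and>
     (\<exists>C (p::nat). \<forall>K::nat. K \<ge> 1 \<longrightarrow>
       (let \<gamma>1 = min (\<mu> / (10 * Lmax\<^sup>2 * sqrt (10 * (real n)\<^sup>2 + 2 * real n + 29)))
                       (4 * ln (sqrt (real n) * real K) / (\<mu> * real n * real K))
        in (norm (ieg n F \<gamma>1 (2 * \<gamma>1) z0 K - zs))\<^sup>2
           \<le> C * (1 + ln (real K)) ^ p * (exp (- real K * \<mu>\<^sup>2 / Lmax\<^sup>2) + 1 / (real K)\<^sup>2)))"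
proof -
  have "L i \<le> Lmax" if "i \<in> {1..n}" for i
    unfolding Lmax_def using that by (intro Max_ge) auto
  then have "\<forall>i\<in>{1..n}. lipschitz_on Lmax UNIV (F i)"
    using lip by (auto intro: lipschitz_on_le)
  then interpret ieg_problem n F Lmax \<mu> zs
    using n2 mu_pos smon sol by unfold_locales auto
  show ?thesis
    unfolding \<sigma>2_def
    using ieg_linear_convergence[OF n2] ieg_decreasing_step_rate[OF n2] by auto
qed

end
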